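(* Fix $n\ge1$. The map $\Psi\colon\mathrm{MAD}(c^\times)\to\overline{\mathcal{M}}_{n+1}$ is a bijection.
   Context: Place points $1,\ldots,n+1$ left to right on a horizontal line. An arc is a curve from a point $i$ to a point $j>i$ moving monotonically rightward and passing above or below each of $i+1,\ldots,j-1$; arcs are identified if they have the same endpoints and pass above the same points. A noncrossing arc diagram is a set of arcs that can be drawn so that no two share a left endpoint, no two share a right endpoint, and no two cross in their interiors. An arc from $i$ to $j$ is $c^\times$-sortable if, for each $k$ with $i<k<j$, it passes above $k$ when $k$ is odd and below $k$ when $k$ is even. $\mathrm{MAD}(c^\times)$ is the set of noncrossing arc diagrams consisting of $c^\times$-sortable arcs that are maximal under inclusion among such diagrams. For $\delta\in\mathrm{MAD}(c^\times)$, $\Psi(\delta)=\mathtt{M}_1\cdots\mathtt{M}_{n+1}$ where $\mathtt{M}_i=\mathtt{U}$ if $i\le n$ and $i+1$ is not the right endpoint of an arc of $\delta$; $\mathtt{M}_i=\mathtt{D}$ if $i\ge2$ and $i-1$ is not the left endpoint of an arc of $\delta$; and $\mathtt{M}_i=\mathtt{H}$ otherwise. A Motzkin path of length $m$ is a word in $\mathtt{U},\mathtt{D},\mathtt{H}$ of length $m$ with equally many $\mathtt{U}$'s and $\mathtt{D}$'s and every prefix having at least as many $\mathtt{U}$'s as $\mathtt{D}$'s. A peak is a consecutive $\mathtt{U}\mathtt{D}$; its height is $\#_\mathtt{U}(P)-\#_\mathtt{D}(P)$ for $P$ the prefix ending with that $\mathtt{U}$. $\overline{\mathcal{M}}_m$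 is the set of Motzkin paths of length $m$ with no peak of height $1$. (It is known that $\Psi(\delta)\in\overline{\mathcal{M}}_{n+1}$ for every $\delta\in\mathrm{MAD}(c^\times)$.) *)

theory Defs
  imports Main
begin

text \<open>An arc on the points 1..N is a triple (i, j, A): left endpoint i, right endpoint j,
  and A = the set of interior points k (i < k < j) that the arc passes ABOVE
  (it passes below the remaining interior points).\<close>
type_synonym arc = "nat \<times> nat \<times> nat set"

definition left_end :: "arc \<Rightarrow> nat" where "left_end a = fst a"
definition right_end :: "arc \<Rightarrow> nat" where "right_end a = fst (snd a)"
definition above_set :: "arc \<Rightarrow> nat set" where "above_set a = snd (snd a)"

definition is_arc :: "nat \<Rightarrow> arc \<Rightarrow> bool" where
  "is_arc N a \<longleftrightarrow> 1 \<le> left_end a \<and> left_end a < right_end a \<and> right_end a \<le> N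
     \<and> above_set a \<subseteq> {left_end a<..<right_end a}"

definition pos :: "arc \<Rightarrow> nat \<Rightarrow> int" where
  "pos a k = (if k = left_end a \<or> k = right_end a then 0
              else if k \<in> above_set a then 1 else -1)"

text \<open>Two arcs cross (cannot be drawn without an interior crossing) iff on the common closed
  interval of their endpoints one is strictly above the other at some point and strictly
  below it at another point.\<close>
definition arcs_cross :: "arc \<Rightarrow> arc \<Rightarrow> bool" where
  "arcs_cross a b \<longleftrightarrow>
    (\<exists>k \<in> {max (left_end a) (left_end b) .. min (right_end a) (right_end b)}.
     \<exists>k' \<in> {max (left_end a) (left_end b) .. min (right_end a) (right_end b)}.
       pos a k > pos b k \<and> pos a k' < pos b k')"

definition noncrossing_diagram :: "nat \<Rightarrow> arc set \<Rightarrow> bool" where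
  "noncrossing_diagram N \<delta> \<longleftrightarrow>
     (\<forall>a \<in> \<delta>. is_arc N a) \<and>
     (\<forall>a \<in> \<delta>. \<forall>b \<in> \<delta>. a \<noteq> b \<longrightarrow>
        left_end a \<noteq> left_end b \<and> right_end a \<noteq> right_end b \<and> \<not> arcs_cross a b)"

definition sortable :: "arc \<Rightarrow> bool" where
  "sortable a \<longleftrightarrow> above_set a = {k \<in> {left_end a<..<right_end a}. odd k}"

definition MAD :: "nat \<Rightarrow> arc set set" where
  "MAD n = {\<delta>. noncrossing_diagram (n+1) \<delta> \<and> (\<forall>a \<in> \<delta>. sortable a) \<and>
     (\<forall>\<delta>'. noncrossing_diagram (n+1) \<delta>' \<and> (\<forall>a \<in> \<delta>'. sortable a) \<and> \<delta> \<subseteq> \<delta>' \<longrightarrow> \<delta>' = \<delta>)}"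

datatype step = U | D | H

definition Psi :: "nat \<Rightarrow> arc set \<Rightarrow> step list" where
  "Psi n \<delta> = map (\<lambda>i.
      if i \<le> n \<and> (i+1) \<notin> right_end ` \<delta> then U
      else if 2 \<le> i \<and> (i-1) \<notin> left_end ` \<delta> then D
      else H) [1..<n+2]"

definition cnt :: "step \<Rightarrow> step list \<Rightarrow> int" where
  "cnt s w = int (length (filter (\<lambda>x. x = s) w))"

definition motzkin :: "nat \<Rightarrow> step list \<Rightarrow> bool" where
  "motzkin m w \<longleftrightarrow> length w = m \<and> cnt U w = cnt D w \<and>
     (\<forall>p \<le> length w. cnt U (take p w) \<ge> cnt D (take p w))"

definition has_peak_height :: "int \<Rightarrow> step list \<Rightarrow> bool" where
  "has_peak_height h w \<longleftrightarrow> (\<exists>p. p + 1 < length w \<and> w ! p = U \<and> w ! (p+1) = D \<and>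
     cnt U (take (p+1) w) - cnt D (take (p+1) w) = h)"

definition Mbar :: "nat \<Rightarrow> step list set" where
  "Mbar m = {w. motzkin m w \<and> \<not> has_peak_height 1 w}"

end

theory Submission
  imports Defs
begin

(* A c-cross-sortable arc is determined by its endpoints, and for i < k the sortable arcs (i, j)
   and (k, l) cross exactly when they interleave (k < j < l) with k + j even, or nest (l < j) with
   k + l odd. Hence a sortable noncrossing diagram is determined by its sets L of left ends and R
   of right ends, Psi depends only on (L, R), and maximality means: a is in L or a + 2 is in R,
   and every gap [a, a + 1] contains an end or lies under an arc.
   Under the first condition the height of Psi after p steps is 1 + #(L up to p - 1) - #(R up to
   p + 1). Counting arcs shows that it is nonnegative and ends at 0, and a peak of height 1 at p
   would leave the gap [p, p + 1] uncovered. The steps recover L and R, so Psi is injective.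
   Conversely, the end sets read off a path in Mbar satisfy a ballot condition; matching the right
   ends from left to right with open left ends chosen by parity gives a noncrossing sortable
   diagram with these ends, which is maximal because every peak has height at least 2. *)

section \<open>Sortable arcs\<close>

definition sortable_arc :: "nat \<Rightarrow> nat \<Rightarrow> arc" where
  "sortable_arc i j = (i, j, {k \<in> {i<..<j}. odd k})"

lemma sortable_arc_simps [simp]:
  "left_end (sortable_arc i j) = i"
  "right_end (sortable_arc i j) = j"
  "above_set (sortable_arc i j) = {k \<in> {i<..<j}. odd k}"
  by (simp_all add: sortable_arc_def left_end_def right_end_def above_set_def)

lemma sortable_sortable_arc [simp]: "sortable (sortable_arc i j)"
  by (simp add: sortable_def)

lemma sortable_imp_eq_sortable_arc: "sortable a \<Longrightarrow> a = sortable_arc (left_end a) (right_end a)"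
  by (cases a) (simp add: sortable_def sortable_arc_def left_end_def right_end_def above_set_def)

lemma is_arc_sortable_arc [simp]: "is_arc N (sortable_arc i j) \<longleftrightarrow> 1 \<le> i \<and> i < j \<and> j \<le> N"
  by (auto simp: is_arc_def)

lemma pos_sortable_arc:
  "pos (sortable_arc i j) x = (if x = i \<or> x = j then 0 else if i < x \<and> x < j \<and> odd x then 1 else -1)"
  by (auto simp: pos_def)

lemma arcs_cross_commute: "arcs_cross a b \<longleftrightarrow> arcs_cross b a"
  unfolding arcs_cross_def by (auto simp: max.commute min.commute)

lemma arcs_cross_sortable_arc_disjoint:
  assumes "i < j" "j \<le> k" "k < l"
  shows "\<not> arcs_cross (sortable_arc i j) (sortable_arc k l)"
  using assms unfolding arcs_cross_def by (auto simp: pos_sortable_arc)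

lemma arcs_cross_sortable_arc_interleaved:
  assumes "i < k" "k < j" "j < l"
  shows "arcs_cross (sortable_arc i j) (sortable_arc k l) \<longleftrightarrow> even (k + j)"
  using assms unfolding arcs_cross_def
  by (auto simp: pos_sortable_arc max_def min_def split: if_splits)

lemma arcs_cross_sortable_arc_nested:
  assumes "i < k" "k < l" "l < j"
  shows "arcs_cross (sortable_arc i j) (sortable_arc k l) \<longleftrightarrow> odd (k + l)"
  using assms unfolding arcs_cross_def
  by (auto simp: pos_sortable_arc max_def min_def split: if_splits)

lemma arcs_cross_sortable_arc_same_right:
  assumes "i < k" "k < j"
  shows "\<not> arcs_cross (sortable_arc i j) (sortable_arc k j)"
  using assms unfolding arcs_cross_def
  by (auto simp: pos_sortable_arc max_def min_def split: if_splits)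

lemma arcs_cross_sortable_arc:
  assumes "i < j" "k < l" "i < k"
  shows "arcs_cross (sortable_arc i j) (sortable_arc k l) \<longleftrightarrow>
    k < j \<and> j < l \<and> even (k + j) \<or> l < j \<and> odd (k + l)"
proof -
  consider "j \<le> k" | "k < j" "j < l" | "j = l" | "l < j"
    using assms by linarith
  then show ?thesis
    by cases (use assms arcs_cross_sortable_arc_disjoint arcs_cross_sortable_arc_interleaved
        arcs_cross_sortable_arc_nested arcs_cross_sortable_arc_same_right in auto)
qed

section \<open>Sortable noncrossing diagrams\<close>

definition sortable_diagram :: "nat \<Rightarrow> arc set \<Rightarrow> bool" where
  "sortable_diagram N \<delta> \<longleftrightarrow> noncrossing_diagram N \<delta> \<and> (\<forall>a\<in>\<delta>. sortable a)"

lemma MAD_iff: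
  "\<delta> \<in> MAD n \<longleftrightarrow> sortable_diagram (n+1) \<delta> \<and>
     (\<forall>\<delta>'. sortable_diagram (n+1) \<delta>' \<and> \<delta> \<subseteq> \<delta>' \<longrightarrow> \<delta>' = \<delta>)"
  unfolding MAD_def sortable_diagram_def by auto

lemma sortable_diagram_arcD:
  assumes "sortable_diagram N \<delta>" "a \<in> \<delta>"
  shows "a = sortable_arc (left_end a) (right_end a)"
    and "1 \<le> left_end a" "left_end a < right_end a" "right_end a \<le> N"
  using assms sortable_imp_eq_sortable_arc
  by (auto simp: sortable_diagram_def noncrossing_diagram_def is_arc_def)

lemma sortable_diagram_arcE:
  assumes "sortable_diagram N \<delta>" "a \<in> \<delta>"
  obtains i j where "a = sortable_arc i j" "1 \<le> i" "i < j" "j \<le> N"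
  using sortable_diagram_arcD[OF assms] by blast

lemma sortable_diagram_ends_subset:
  assumes "sortable_diagram N \<delta>"
  shows "left_end ` \<delta> \<subseteq> {1..<N}" and "right_end ` \<delta> \<subseteq> {2..N}"
proof (rule_tac [!] image_subsetI)
  fix a assume "a \<in> \<delta>"
  from sortable_diagram_arcD(2-4)[OF assms this]
  show "left_end a \<in> {1..<N}" "right_end a \<in> {2..N}" by simp_all
qed

lemma sortable_diagram_not_cross:
  assumes "sortable_diagram N \<delta>" "a \<in> \<delta>" "b \<in> \<delta>"
  shows "\<not> arcs_cross a b"
proof (cases "a = b")
  case True
  then show ?thesis by (auto simp: arcs_cross_def)
qed (use assms in \<open>auto simp: sortable_diagram_def noncrossing_diagram_def\<close>)

lemma inj_on_left_end: "sortable_diagram N \<delta> \<Longrightarrow> inj_on left_end \<delta>"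
  unfolding sortable_diagram_def noncrossing_diagram_def inj_on_def by metis

lemma inj_on_right_end: "sortable_diagram N \<delta> \<Longrightarrow> inj_on right_end \<delta>"
  unfolding sortable_diagram_def noncrossing_diagram_def inj_on_def by metis

lemma sortable_diagram_finite:
  assumes "sortable_diagram N \<delta>"
  shows "finite \<delta>"
proof (rule finite_subset)
  show "\<delta> \<subseteq> (\<lambda>(i, j). sortable_arc i j) ` ({..N} \<times> {..N})"
    by (force elim: sortable_diagram_arcE[OF assms])
qed simp

lemma sortable_diagram_insert:
  assumes sd: "sortable_diagram N \<delta>" and ij: "1 \<le> i" "i < j" "j \<le> N"
    and compatible: "\<And>c. c \<in> \<delta> \<Longrightarrow>
      left_end c \<noteq> i \<and> right_end c \<noteq> j \<and> \<not> arcs_cross c (sortable_arc i j)"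
  shows "sortable_diagram N (insert (sortable_arc i j) \<delta>)"
  using sd unfolding sortable_diagram_def noncrossing_diagram_def
proof (intro conjI ballI impI)
  fix a b
  assume "a \<in> insert (sortable_arc i j) \<delta>" "b \<in> insert (sortable_arc i j) \<delta>" "a \<noteq> b"
  then show "left_end a \<noteq> left_end b" "right_end a \<noteq> right_end b" "\<not> arcs_cross a b"
    using sd compatible arcs_cross_commute unfolding sortable_diagram_def noncrossing_diagram_def
    by (metis insert_iff sortable_arc_simps)+
qed (use ij in auto)

lemma sortable_diagrams_same_left_ends_left_end_le:
  assumes sd1: "sortable_diagram N \<delta>1" and sd2: "sortable_diagram N \<delta>2"
    and L: "left_end ` \<delta>1 = left_end ` \<delta>2"
    and below: "\<And>a. right_end a < q \<Longrightarrow> a \<in> \<delta>1 \<longleftrightarrow> a \<in> \<delta>2"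
    and a1: "a1 \<in> \<delta>1" "right_end a1 = q" and a2: "a2 \<in> \<delta>2" "right_end a2 = q"
  shows "left_end a2 \<le> left_end a1"
proof (rule ccontr)
  assume "\<not> left_end a2 \<le> left_end a1"
  then have lt: "left_end a1 < left_end a2" by simp
  have beyond: "q < right_end b"
    if sd: "sortable_diagram N \<delta>" and sd': "sortable_diagram N \<delta>'"
      and below': "\<And>a. right_end a < q \<Longrightarrow> a \<in> \<delta> \<Longrightarrow> a \<in> \<delta>'"
      and a: "a \<in> \<delta>" "right_end a = q" and a': "a' \<in> \<delta>'" "right_end a' = q"
      and b: "b \<in> \<delta>" "left_end b = left_end a'" and ne: "left_end a \<noteq> left_end a'"
    for \<delta> \<delta>' a a' b
  proof -
    have "right_end b \<noteq> q"
      using inj_on_right_end[OF sd] a b ne by (metis inj_onD)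
    moreover have "\<not> right_end b < q"
      using below'[OF _ b(1)] inj_on_left_end[OF sd'] a' b by (metis inj_onD less_irrefl)
    ultimately show ?thesis by linarith
  qed
  obtain k1 where k1: "a1 = sortable_arc k1 q"
    using a1 by (auto elim: sortable_diagram_arcE[OF sd1])
  obtain k2 where k2: "a2 = sortable_arc k2 q" "k2 < q"
    using a2 by (auto elim: sortable_diagram_arcE[OF sd2])
  obtain b where b: "b \<in> \<delta>1" "left_end b = k2"
    using L a2(1) k2 by (metis imageE imageI sortable_arc_simps(1))
  obtain c where c: "c \<in> \<delta>2" "left_end c = k1"
    using L a1(1) k1 by (metis imageE imageI sortable_arc_simps(1))
  obtain l where l: "b = sortable_arc k2 l" "q < l"
    using beyond[OF sd1 sd2 _ a1 a2 b(1)] below lt b k1 k2 sortable_diagram_arcD(1)[OF sd1 b(1)]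
    by auto
  obtain l' where l': "c = sortable_arc k1 l'" "q < l'"
    using beyond[OF sd2 sd1 _ a2 a1 c(1)] below lt c k1 k2 sortable_diagram_arcD(1)[OF sd2 c(1)]
    by auto
  have "k1 < k2" using lt k1 k2 by simp
  \<comment> \<open>(k1, q) and (k2, l) interleave in \<delta>1, while (k2, q) nests in (k1, l') in \<delta>2\<close>
  have "odd (k2 + q)"
    using sortable_diagram_not_cross[OF sd1 a1(1) b(1)]
      arcs_cross_sortable_arc[of k1 q k2 l] \<open>k1 < k2\<close> k2 k1 l by simp
  moreover have "even (k2 + q)"
    using sortable_diagram_not_cross[OF sd2 c(1) a2(1)]
      arcs_cross_sortable_arc[of k1 l' k2 q] \<open>k1 < k2\<close> k2 l' by simp
  ultimately show False by simp
qed

lemma sortable_diagram_eq_if_same_ends: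
  assumes sd1: "sortable_diagram N \<delta>1" and sd2: "sortable_diagram N \<delta>2"
    and L: "left_end ` \<delta>1 = left_end ` \<delta>2" and R: "right_end ` \<delta>1 = right_end ` \<delta>2"
  shows "\<delta>1 = \<delta>2"
proof -
  have transfer: "a \<in> \<delta>'"
    if sd: "sortable_diagram N \<delta>" and sd': "sortable_diagram N \<delta>'"
      and L': "left_end ` \<delta> = left_end ` \<delta>'" and R': "right_end ` \<delta> = right_end ` \<delta>'"
      and below: "\<And>b. right_end b < right_end a \<Longrightarrow> b \<in> \<delta> \<longleftrightarrow> b \<in> \<delta>'"
      and a: "a \<in> \<delta>"
    for \<delta> \<delta>' a
  proof -
    obtain a' where a': "a' \<in> \<delta>'" "right_end a' = right_end a"
      using R' a by (metis imageE imageI)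
    have "left_end a = left_end a'"
      using sortable_diagrams_same_left_ends_left_end_le[OF sd sd' L' below a refl a']
        sortable_diagrams_same_left_ends_left_end_le[OF sd' sd L'[symmetric] _ a' a refl]
        below by (metis le_antisym)
    then have "a = a'"
      using sortable_diagram_arcD(1)[OF sd a] sortable_diagram_arcD(1)[OF sd' a'(1)] a'(2) by metis
    then show ?thesis using a' by simp
  qed
  have "\<forall>a. right_end a = q \<longrightarrow> a \<in> \<delta>1 \<longleftrightarrow> a \<in> \<delta>2" for q
  proof (induction q rule: less_induct)
    case (less q)
    then show ?case
      using transfer[OF sd1 sd2 L R] transfer[OF sd2 sd1 L[symmetric] R[symmetric]] by metis
  qed
  then show ?thesis by blast
qed

section \<open>Maximal diagrams\<close>

lemma MAD_contains_compatible_arc: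
  assumes "\<delta> \<in> MAD n" "1 \<le> i" "i < j" "j \<le> n + 1"
    and "\<And>c. c \<in> \<delta> \<Longrightarrow>
      left_end c \<noteq> i \<and> right_end c \<noteq> j \<and> \<not> arcs_cross c (sortable_arc i j)"
  shows "sortable_arc i j \<in> \<delta>"
proof -
  have "sortable_diagram (n+1) (insert (sortable_arc i j) \<delta>)"
    using assms MAD_iff sortable_diagram_insert by metis
  then show ?thesis using assms(1) MAD_iff by blast
qed

lemma MAD_left_or_right_two:
  assumes mad: "\<delta> \<in> MAD n" and a: "1 \<le> a" "a + 2 \<le> n + 1"
  shows "a \<in> left_end ` \<delta> \<or> a + 2 \<in> right_end ` \<delta>"
proof (rule ccontr)
  assume free: "\<not> ?thesis"
  have sd: "sortable_diagram (n+1) \<delta>" using mad MAD_iff by blast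
  have "sortable_arc a (a+2) \<in> \<delta>"
  proof (rule MAD_contains_compatible_arc[OF mad a(1) _ a(2)])
    fix c assume c: "c \<in> \<delta>"
    obtain k l where kl: "c = sortable_arc k l" "k < l"
      using sortable_diagram_arcE[OF sd c] by metis
    have "k \<noteq> a" "l \<noteq> a + 2" using free c kl by force+
    then have "\<not> arcs_cross (sortable_arc k l) (sortable_arc a (a+2))"
      using arcs_cross_sortable_arc[of k l a "a+2"] arcs_cross_sortable_arc[of a "a+2" k l]
        arcs_cross_commute kl(2) by (cases "k < a") (auto simp: less_Suc_eq)
    then show "left_end c \<noteq> a \<and> right_end c \<noteq> a + 2 \<and> \<not> arcs_cross c (sortable_arc a (a+2))"
      using \<open>k \<noteq> a\<close> \<open>l \<noteq> a + 2\<close> kl by simp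
  qed simp
  then show False using free by force
qed

lemma MAD_unit_gap:
  assumes mad: "\<delta> \<in> MAD n" and a: "1 \<le> a" "a \<le> n"
  shows "a \<in> left_end ` \<delta> \<or> a + 1 \<in> right_end ` \<delta> \<or> (\<exists>b\<in>\<delta>. left_end b < a \<and> a + 1 < right_end b)"
proof (rule ccontr)
  assume free: "\<not> ?thesis"
  have sd: "sortable_diagram (n+1) \<delta>" using mad MAD_iff by blast
  have "sortable_arc a (a+1) \<in> \<delta>"
  proof (rule MAD_contains_compatible_arc[OF mad a(1)])
    fix c assume c: "c \<in> \<delta>"
    obtain k l where kl: "c = sortable_arc k l" "k < l"
      using sortable_diagram_arcE[OF sd c] by metis
    have "k \<noteq> a" "l \<noteq> a + 1" "\<not> (k < a \<and> a + 1 < l)" using free c kl by force+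
    then have "\<not> arcs_cross (sortable_arc k l) (sortable_arc a (a+1))"
      using arcs_cross_sortable_arc[of k l a "a+1"] arcs_cross_sortable_arc[of a "a+1" k l]
        arcs_cross_commute kl(2) by (cases "k < a") (auto simp: less_Suc_eq)
    then show "left_end c \<noteq> a \<and> right_end c \<noteq> a + 1 \<and> \<not> arcs_cross c (sortable_arc a (a+1))"
      using \<open>k \<noteq> a\<close> \<open>l \<noteq> a + 1\<close> kl by simp
  qed (use a in simp_all)
  then show False using free by force
qed

lemma saturated_crosses_free_arc:
  assumes sd: "sortable_diagram (n+1) \<delta>"
    and two: "\<And>a. 1 \<le> a \<Longrightarrow> a + 2 \<le> n + 1 \<Longrightarrow> a \<in> left_end ` \<delta> \<or> a + 2 \<in> right_end ` \<delta>"
    and gap: "\<And>a. 1 \<le> a \<Longrightarrow> a \<le> n \<Longrightarrow>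
       a \<in> left_end ` \<delta> \<or> a + 1 \<in> right_end ` \<delta> \<or> (\<exists>b\<in>\<delta>. left_end b < a \<and> a + 1 < right_end b)"
    and xy: "1 \<le> x" "x < y" "y \<le> n + 1"
    and free: "x \<notin> left_end ` \<delta>" "y \<notin> right_end ` \<delta>"
  shows "\<exists>c\<in>\<delta>. arcs_cross c (sortable_arc x y)"
proof -
  consider "y = x + 1" | "y = x + 2" | "x + 2 < y" using xy by linarith
  then show ?thesis
  proof cases
    case 1
    then obtain c where c: "c \<in> \<delta>" "left_end c < x" "x + 1 < right_end c"
      using gap[of x] xy free by auto
    then have "arcs_cross c (sortable_arc x y)"
      using arcs_cross_sortable_arc[of "left_end c" "right_end c" x y] 1 xy
        sortable_diagram_arcD(1)[OF sd c(1)] by auto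
    then show ?thesis using c(1) by blast
  next
    case 2
    then show ?thesis using two[of x] xy free by auto
  next
    case 3
    then obtain c where c: "c \<in> \<delta>" "right_end c = x + 2"
      using two[of x] xy free by auto
    have "left_end c < x + 2" "left_end c \<noteq> x"
      using sortable_diagram_arcD(3)[OF sd c(1)] c free by auto
    then consider "left_end c < x" | "left_end c = x + 1" by linarith
    then have "arcs_cross c (sortable_arc x y)"
      using arcs_cross_sortable_arc[of "left_end c" "right_end c" x y]
        arcs_cross_sortable_arc[of x y "left_end c" "right_end c"] arcs_cross_commute
        sortable_diagram_arcD(1)[OF sd c(1)] c 3 xy by cases auto
    then show ?thesis using c(1) by blast
  qed
qed

lemma MAD_if_saturated:
  assumes sd: "sortable_diagram (n+1) \<delta>"
    and two: "\<And>a. 1 \<le> a \<Longrightarrow> a + 2 \<le> n + 1 \<Longrightarrow> a \<in> left_end ` \<delta> \<or> a + 2 \<in> right_end ` \<delta>"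
    and gap: "\<And>a. 1 \<le> a \<Longrightarrow> a \<le> n \<Longrightarrow>
       a \<in> left_end ` \<delta> \<or> a + 1 \<in> right_end ` \<delta> \<or> (\<exists>b\<in>\<delta>. left_end b < a \<and> a + 1 < right_end b)"
  shows "\<delta> \<in> MAD n"
  unfolding MAD_iff
proof (intro conjI allI impI sd)
  fix \<delta>' assume "sortable_diagram (n + 1) \<delta>' \<and> \<delta> \<subseteq> \<delta>'"
  then have sd': "sortable_diagram (n+1) \<delta>'" and sub: "\<delta> \<subseteq> \<delta>'" by auto
  show "\<delta>' = \<delta>"
  proof (rule ccontr)
    assume "\<delta>' \<noteq> \<delta>"
    then obtain b where b: "b \<in> \<delta>'" "b \<notin> \<delta>" using sub by blast
    obtain x y where xy: "b = sortable_arc x y" "1 \<le> x" "x < y" "y \<le> n + 1"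
      using sortable_diagram_arcE[OF sd' b(1)] by metis
    have "c = b" if "c \<in> \<delta>" "left_end c = x \<or> right_end c = y" for c
    proof -
      have c: "c \<in> \<delta>'" using that(1) sub by blast
      show ?thesis
        using that(2) inj_onD[OF inj_on_left_end[OF sd'] _ c b(1)]
          inj_onD[OF inj_on_right_end[OF sd'] _ c b(1)] xy(1) by auto
    qed
    then have "x \<notin> left_end ` \<delta>" "y \<notin> right_end ` \<delta>" using b(2) by blast+
    then obtain c where "c \<in> \<delta>" "arcs_cross c b"
      using saturated_crosses_free_arc[OF sd two gap xy(2-4)] xy(1) by blast
    then show False using sortable_diagram_not_cross[OF sd' _ b(1)] sub by blast
  qed
qed

section \<open>The path of a pair of end sets\<close>

definition step_at :: "nat \<Rightarrow> nat set \<Rightarrow> nat set \<Rightarrow> nat \<Rightarrow> step" where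
  "step_at n L R i = (if i \<le> n \<and> i + 1 \<notin> R then U else if 2 \<le> i \<and> i - 1 \<notin> L then D else H)"

definition ends_path :: "nat \<Rightarrow> nat set \<Rightarrow> nat set \<Rightarrow> step list" where
  "ends_path n L R = map (step_at n L R) [1..<n+2]"

lemma Psi_eq_ends_path: "Psi n \<delta> = ends_path n (left_end ` \<delta>) (right_end ` \<delta>)"
  by (simp add: Psi_def ends_path_def step_at_def)

lemma length_ends_path [simp]: "length (ends_path n L R) = n + 1"
  by (simp add: ends_path_def)

lemma nth_ends_path: "i < n + 1 \<Longrightarrow> ends_path n L R ! i = step_at n L R (i + 1)"
  by (simp add: ends_path_def nth_upt del: upt_Suc)

fun step_value :: "step \<Rightarrow> int" where
  "step_value U = 1"
| "step_value D = -1"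
| "step_value H = 0"

definition height :: "step list \<Rightarrow> nat \<Rightarrow> int" where
  "height w p = cnt U (take p w) - cnt D (take p w)"

lemma height_map_upt:
  assumes "p \<le> m"
  shows "height (map f [1..<m+1]) p = (\<Sum>i=1..p. step_value (f i))"
proof -
  have "take p [1..<m+1] = [1..<p+1]"
    using assms by (subst take_upt) simp_all
  then have "take p (map f [1..<m+1]) = map f [1..<p+1]"
    by (simp add: take_map del: upt_Suc)
  moreover have "height (map f [1..<p+1]) p = (\<Sum>i=1..p. step_value (f i))"
  proof (induction p)
    case (Suc p)
    then show ?case by (cases "f (Suc p)") (simp_all add: height_def cnt_def)
  qed (simp add: height_def cnt_def)
  ultimately show ?thesis by (simp add: height_def)
qed

lemma has_peak_height_ends_path:
  "has_peak_height h (ends_path n L R) \<longleftrightarrow>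
    (\<exists>i. 1 \<le> i \<and> i \<le> n \<and> step_at n L R i = U \<and> step_at n L R (i+1) = D \<and>
      height (ends_path n L R) i = h)"
  unfolding has_peak_height_def height_def
proof safe
  fix p
  assume "p + 1 < length (ends_path n L R)" "ends_path n L R ! p = U" "ends_path n L R ! (p+1) = D"
  then show "\<exists>i\<ge>1. i \<le> n \<and> step_at n L R i = U \<and> step_at n L R (i+1) = D \<and>
      cnt U (take i (ends_path n L R)) - cnt D (take i (ends_path n L R)) =
      cnt U (take (p+1) (ends_path n L R)) - cnt D (take (p+1) (ends_path n L R))"
    by (intro exI[of _ "p+1"]) (simp add: nth_ends_path)
next
  fix i
  assume "1 \<le> i" "i \<le> n" "step_at n L R i = U" "step_at n L R (i+1) = D"
  then show "\<exists>p. p + 1 < length (ends_path n L R) \<and> ends_path n L R ! p = U \<and>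
      ends_path n L R ! (p+1) = D \<and>
      cnt U (take (p+1) (ends_path n L R)) - cnt D (take (p+1) (ends_path n L R)) =
      cnt U (take i (ends_path n L R)) - cnt D (take i (ends_path n L R))"
    by (intro exI[of _ "i-1"]) (simp add: nth_ends_path)
qed

lemma card_Int_atLeastAtMost_Suc:
  "card ({1..Suc m} \<inter> A) = card ({1..m} \<inter> A) + of_bool (Suc m \<in> A)"
proof -
  have "{1..Suc m} \<inter> A = {1..m} \<inter> A \<union> (if Suc m \<in> A then {Suc m} else {})"
    by (auto simp: le_Suc_eq)
  then show ?thesis by simp
qed

lemma sum_step_value_step_at:
  assumes R1: "1 \<notin> R" and two: "\<And>a. 1 \<le> a \<Longrightarrow> a + 2 \<le> n + 1 \<Longrightarrow> a \<in> L \<or> a + 2 \<in> R"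
    and p: "1 \<le> p" "p \<le> n"
  shows "(\<Sum>i=1..p. step_value (step_at n L R i)) =
    1 + int (card ({1..p-1} \<inter> L)) - int (card ({1..p+1} \<inter> R))"
  using p
proof (induction p rule: nat_induct_at_least)
  case base
  then show ?case
    using R1 card_Int_atLeastAtMost_Suc[of 1 R] card_Int_atLeastAtMost_Suc[of 0 R]
    by (auto simp: step_at_def numeral_2_eq_2)
next
  case (Suc p)
  have "step_value (step_at n L R (Suc p)) = of_bool (p \<in> L) - of_bool (p + 2 \<in> R)"
    using two[of p] Suc by (auto simp: step_at_def)
  then show ?case
    using Suc card_Int_atLeastAtMost_Suc[of "p-1" L] card_Int_atLeastAtMost_Suc[of "Suc p" R] by simp
qed

lemma height_ends_path:
  assumes "1 \<notin> R" "\<And>a. 1 \<le> a \<Longrightarrow> a + 2 \<le> n + 1 \<Longrightarrow> a \<in> L \<or> a + 2 \<in> R"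
    and "1 \<le> p" "p \<le> n"
  shows "height (ends_path n L R) p = 1 + int (card ({1..p-1} \<inter> L)) - int (card ({1..p+1} \<inter> R))"
  using assms sum_step_value_step_at height_map_upt[of p "n+1"] by (simp add: ends_path_def)

lemma height_ends_path_total:
  assumes "1 \<notin> R" "\<And>a. 1 \<le> a \<Longrightarrow> a + 2 \<le> n + 1 \<Longrightarrow> a \<in> L \<or> a + 2 \<in> R"
    and "1 \<le> n" "L \<subseteq> {1..n}" "R \<subseteq> {1..n+1}"
  shows "height (ends_path n L R) (n+1) = int (card L) - int (card R)"
proof -
  have "height (ends_path n L R) (n+1) =
      (\<Sum>i=1..n. step_value (step_at n L R i)) + step_value (step_at n L R (n+1))"
    using height_map_upt[of "n+1" "n+1"] by (simp add: ends_path_def)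
  also have "\<dots> = int (card ({1..n} \<inter> L)) - int (card ({1..n+1} \<inter> R))"
    using assms sum_step_value_step_at[of R n L n] card_Int_atLeastAtMost_Suc[of "n-1" L]
    by (auto simp: step_at_def)
  finally show ?thesis
    using assms(4,5) by (simp add: Int_absorb1)
qed

lemma card_left_ends_before_eq:
  assumes sd: "sortable_diagram N \<delta>"
  shows "card ({1..q-1} \<inter> left_end ` \<delta>) =
    card ({1..q} \<inter> right_end ` \<delta>) + card {a\<in>\<delta>. left_end a < q \<and> q < right_end a}"
proof -
  have "{1..q-1} \<inter> left_end ` \<delta> = left_end ` {a\<in>\<delta>. left_end a < q}"
    using sortable_diagram_arcD(2)[OF sd] by force
  then have lefts: "card ({1..q-1} \<inter> left_end ` \<delta>) = card {a\<in>\<delta>. left_end a < q}"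
    using inj_on_left_end[OF sd] by (simp add: card_image inj_on_subset)
  have "{1..q} \<inter> right_end ` \<delta> = right_end ` {a\<in>\<delta>. right_end a \<le> q}"
    using sortable_diagram_arcD(2,3)[OF sd] by force
  then have rights: "card ({1..q} \<inter> right_end ` \<delta>) = card {a\<in>\<delta>. right_end a \<le> q}"
    using inj_on_right_end[OF sd] by (simp add: card_image inj_on_subset)
  have "{a\<in>\<delta>. left_end a < q} =
      {a\<in>\<delta>. right_end a \<le> q} \<union> {a\<in>\<delta>. left_end a < q \<and> q < right_end a}"
    using sortable_diagram_arcD(3)[OF sd] by force
  then have "card {a\<in>\<delta>. left_end a < q} =
      card {a\<in>\<delta>. right_end a \<le> q} + card {a\<in>\<delta>. left_end a < q \<and> q < right_end a}"
    using sortable_diagram_finite[OF sd] by (simp add: card_Un_disjoint disjoint_iff)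
  then show ?thesis using lefts rights by simp
qed

lemma height_Psi_MAD:
  assumes mad: "\<delta> \<in> MAD n" and p: "1 \<le> p" "p \<le> n"
  shows "height (Psi n \<delta>) p =
    1 + int (card ({1..p-1} \<inter> left_end ` \<delta>)) - int (card ({1..p+1} \<inter> right_end ` \<delta>))"
proof -
  have sd: "sortable_diagram (n+1) \<delta>" using mad MAD_iff by blast
  have "1 \<notin> right_end ` \<delta>" using sortable_diagram_ends_subset(2)[OF sd] by auto
  then show ?thesis
    unfolding Psi_eq_ends_path using height_ends_path MAD_left_or_right_two[OF mad] p by blast
qed

lemma motzkin_Psi_MAD:
  assumes mad: "\<delta> \<in> MAD n" and n: "1 \<le> n"
  shows "motzkin (n+1) (Psi n \<delta>)"
proof -
  define L R where "L = left_end ` \<delta>" and "R = right_end ` \<delta>"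
  have sd: "sortable_diagram (n+1) \<delta>" using mad MAD_iff by blast
  have "L \<subseteq> {1..n}" "R \<subseteq> {1..n+1}" "1 \<notin> R"
    using sortable_diagram_ends_subset[OF sd] unfolding L_def R_def by auto
  moreover have "card L = card R"
    unfolding L_def R_def using inj_on_left_end[OF sd] inj_on_right_end[OF sd] by (simp add: card_image)
  ultimately have total: "height (Psi n \<delta>) (n+1) = 0"
    using height_ends_path_total[of R n L] MAD_left_or_right_two[OF mad] n
    unfolding L_def R_def Psi_eq_ends_path by simp
  have "0 \<le> height (Psi n \<delta>) p" if p: "p \<le> n + 1" for p
  proof -
    consider "p = 0" | "1 \<le> p" "p \<le> n" | "p = n + 1" using p by linarith
    then show ?thesis
    proof cases
      case 1
      then show ?thesis by (simp add: height_def cnt_def)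
    next
      case 2
      then show ?thesis
        using height_Psi_MAD[OF mad] card_left_ends_before_eq[OF sd, of "p+1"]
          card_Int_atLeastAtMost_Suc[of "p-1" L]
        unfolding L_def by (cases "p \<in> left_end ` \<delta>") simp_all
    next
      case 3
      then show ?thesis using total by simp
    qed
  qed
  moreover have "length (Psi n \<delta>) = n + 1" by (simp add: Psi_eq_ends_path)
  ultimately show ?thesis
    using total unfolding motzkin_def by (simp add: height_def)
qed

lemma not_has_peak_height_1_Psi_MAD:
  assumes mad: "\<delta> \<in> MAD n"
  shows "\<not> has_peak_height 1 (Psi n \<delta>)"
proof
  define L R where "L = left_end ` \<delta>" and "R = right_end ` \<delta>"
  have sd: "sortable_diagram (n+1) \<delta>" using mad MAD_iff by blast
  assume "has_peak_height 1 (Psi n \<delta>)"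
  then obtain i where i: "1 \<le> i" "i \<le> n" and steps: "step_at n L R i = U" "step_at n L R (i+1) = D"
    and "height (Psi n \<delta>) i = 1"
    unfolding L_def R_def Psi_eq_ends_path has_peak_height_ends_path by blast
  have "i \<notin> L" "i + 1 \<notin> R" using steps by (auto simp: step_at_def split: if_splits)
  obtain b where b: "b \<in> \<delta>" "left_end b < i" "i + 1 < right_end b"
    using MAD_unit_gap[OF mad i] \<open>i \<notin> L\<close> \<open>i + 1 \<notin> R\<close> unfolding L_def R_def by blast
  have "card {a\<in>\<delta>. left_end a < i \<and> i < right_end a} = 0"
    using \<open>height (Psi n \<delta>) i = 1\<close> height_Psi_MAD[OF mad i] card_left_ends_before_eq[OF sd, of i]
      card_Int_atLeastAtMost_Suc[of i R] \<open>i + 1 \<notin> R\<close> unfolding L_def R_def by simp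
  moreover have "card {a\<in>\<delta>. left_end a < i \<and> i < right_end a} > 0"
  proof (rule card_gt_0_iff[THEN iffD2], intro conjI)
    show "finite {a\<in>\<delta>. left_end a < i \<and> i < right_end a}"
      using sortable_diagram_finite[OF sd] by simp
    have "b \<in> {a\<in>\<delta>. left_end a < i \<and> i < right_end a}" using b by simp
    then show "{a\<in>\<delta>. left_end a < i \<and> i < right_end a} \<noteq> {}" by blast
  qed
  ultimately show False by simp
qed

lemma Psi_MAD_in_Mbar: "\<delta> \<in> MAD n \<Longrightarrow> 1 \<le> n \<Longrightarrow> Psi n \<delta> \<in> Mbar (n+1)"
  using motzkin_Psi_MAD not_has_peak_height_1_Psi_MAD by (simp add: Mbar_def)

lemma ends_path_eq_imp_ends_eq:
  assumes eq: "ends_path n L R = ends_path n L' R'"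
    and sub: "L \<subseteq> {1..n}" "R \<subseteq> {2..n+1}" "L' \<subseteq> {1..n}" "R' \<subseteq> {2..n+1}"
    and two: "\<And>a. 1 \<le> a \<Longrightarrow> a + 2 \<le> n + 1 \<Longrightarrow> a \<in> L \<or> a + 2 \<in> R"
    and two': "\<And>a. 1 \<le> a \<Longrightarrow> a + 2 \<le> n + 1 \<Longrightarrow> a \<in> L' \<or> a + 2 \<in> R'"
  shows "L = L'" and "R = R'"
proof -
  have step: "step_at n L R i = step_at n L' R' i" if "1 \<le> i" "i \<le> n + 1" for i
    using arg_cong[OF eq, of "\<lambda>w. w ! (i - 1)"] that by (simp add: nth_ends_path)
  show "R = R'"
  proof (rule set_eqI)
    fix x
    have "x \<in> R \<longleftrightarrow> 2 \<le> x \<and> x \<le> n + 1 \<and> step_at n L R (x-1) \<noteq> U"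
      using sub(2) by (auto simp: step_at_def)
    moreover have "x \<in> R' \<longleftrightarrow> 2 \<le> x \<and> x \<le> n + 1 \<and> step_at n L' R' (x-1) \<noteq> U"
      using sub(4) by (auto simp: step_at_def)
    moreover have "2 \<le> x \<Longrightarrow> x \<le> n + 1 \<Longrightarrow> step_at n L R (x-1) = step_at n L' R' (x-1)"
      by (rule step) simp_all
    ultimately show "x \<in> R \<longleftrightarrow> x \<in> R'" by metis
  qed
  show "L = L'"
  proof (rule set_eqI)
    fix x
    show "x \<in> L \<longleftrightarrow> x \<in> L'"
    proof (cases "1 \<le> x \<and> x \<le> n")
      case True
      then show ?thesis
        using step[of "x+1"] two[of x] two'[of x] \<open>R = R'\<close> by (auto simp: step_at_def split: if_splits)
    qed (use sub in auto)
  qed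
qed

lemma inj_on_Psi_MAD: "inj_on (Psi n) (MAD n)"
proof (rule inj_onI)
  fix \<delta>1 \<delta>2 assume mad: "\<delta>1 \<in> MAD n" "\<delta>2 \<in> MAD n" and eq: "Psi n \<delta>1 = Psi n \<delta>2"
  have sd: "sortable_diagram (n+1) \<delta>1" "sortable_diagram (n+1) \<delta>2" using mad MAD_iff by blast+
  have "left_end ` \<delta>1 = left_end ` \<delta>2" "right_end ` \<delta>1 = right_end ` \<delta>2"
    using ends_path_eq_imp_ends_eq[OF eq[unfolded Psi_eq_ends_path]]
      sortable_diagram_ends_subset[OF sd(1)] sortable_diagram_ends_subset[OF sd(2)]
      MAD_left_or_right_two[OF mad(1)] MAD_left_or_right_two[OF mad(2)]
    by (simp_all add: atLeastLessThanSuc_atLeastAtMost)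
  then show "\<delta>1 = \<delta>2" by (rule sortable_diagram_eq_if_same_ends[OF sd])
qed

section \<open>Greedy matching of end sets\<close>

(* Open left ends y above the partner k of q belong to arcs interleaving with (k, q), which
   requires odd (y + q); an open left end below k belongs to an arc nesting over (k, q), which
   requires even (k + q). This choice of k meets both demands. *)
definition pick_partner :: "nat \<Rightarrow> nat set \<Rightarrow> nat" where
  "pick_partner q S = (if \<exists>y\<in>S. even (y + q) then Max {y\<in>S. even (y + q)} else Min S)"

lemma pick_partner_in:
  assumes "finite S" "S \<noteq> {}"
  shows "pick_partner q S \<in> S"
proof (cases "\<exists>y\<in>S. even (y + q)")
  case True
  then have "Max {y\<in>S. even (y + q)} \<in> {y\<in>S. even (y + q)}"
    using assms by (intro Max_in) auto
  then show ?thesis using True by (simp add: pick_partner_def)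
qed (use assms in \<open>simp add: pick_partner_def\<close>)

lemma pick_partner_below:
  assumes "finite S" "y \<in> S" "y < pick_partner q S"
  shows "even (pick_partner q S + q)"
proof (cases "\<exists>y\<in>S. even (y + q)")
  case True
  then have "Max {y\<in>S. even (y + q)} \<in> {y\<in>S. even (y + q)}"
    using assms by (intro Max_in) auto
  then show ?thesis using True by (simp add: pick_partner_def)
next
  case False
  then show ?thesis using assms Min_le[OF assms(1,2)] by (simp add: pick_partner_def)
qed

lemma pick_partner_above:
  assumes "finite S" "y \<in> S" "pick_partner q S < y"
  shows "odd (y + q)"
proof (rule ccontr)
  assume "\<not> odd (y + q)"
  then have "y \<le> Max {y\<in>S. even (y + q)}" "\<exists>y\<in>S. even (y + q)"
    using assms by (auto intro: Max_ge)
  then show False using assms(3) by (simp add: pick_partner_def)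
qed

primrec open_lefts :: "nat set \<Rightarrow> nat set \<Rightarrow> nat \<Rightarrow> nat set" where
  "open_lefts L R 0 = {}"
| "open_lefts L R (Suc p) =
    (if Suc p \<in> R then open_lefts L R p - {pick_partner (Suc p) (open_lefts L R p)}
     else open_lefts L R p) \<union> (if Suc p \<in> L then {Suc p} else {})"

lemma open_lefts_subset: "open_lefts L R p \<subseteq> L \<inter> {1..p}"
  by (induction p) auto

lemma finite_open_lefts [simp]: "finite (open_lefts L R p)"
  using open_lefts_subset finite_subset by (metis finite_Int finite_atLeastAtMost)

lemma open_lefts_iff:
  "k \<in> open_lefts L R p \<longleftrightarrow> k \<in> L \<and> 1 \<le> k \<and> k \<le> p \<and>
    \<not> (\<exists>q. k < q \<and> q \<le> p \<and> q \<in> R \<and> pick_partner q (open_lefts L R (q-1)) = k)"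
proof (induction p)
  case (Suc p)
  show ?case
  proof (cases "k = Suc p")
    case True
    then have "k \<notin> open_lefts L R p" using open_lefts_subset by fastforce
    then show ?thesis using True by auto
  qed (use Suc in \<open>auto simp: le_Suc_eq\<close>)
qed simp

locale greedy_matching =
  fixes N :: nat and L R :: "nat set"
  assumes L_subset: "L \<subseteq> {1..N}" and R_subset: "R \<subseteq> {1..N}"
    and card_L_eq_card_R: "card L = card R"
    and ballot: "\<And>q. q \<in> R \<Longrightarrow> card ({1..q-1} \<inter> R) < card ({1..q-1} \<inter> L)"
begin

lemma card_open_lefts: "card (open_lefts L R p) + card ({1..p} \<inter> R) = card ({1..p} \<inter> L)"
proof (induction p)
  case (Suc p)
  define S where "S = open_lefts L R p"
  define T where "T = (if Suc p \<in> R then S - {pick_partner (Suc p) S} else S)"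
  have "card T + of_bool (Suc p \<in> R) = card S"
  proof (cases "Suc p \<in> R")
    case True
    then have "S \<noteq> {}" using Suc ballot[of "Suc p"] unfolding S_def by auto
    then have "pick_partner (Suc p) S \<in> S" "card S > 0"
      by (simp_all add: pick_partner_in S_def card_gt_0_iff)
    then show ?thesis using True by (simp add: T_def S_def)
  qed (simp add: T_def)
  moreover have "card (open_lefts L R (Suc p)) = card T + of_bool (Suc p \<in> L)"
  proof -
    have "open_lefts L R (Suc p) = T \<union> (if Suc p \<in> L then {Suc p} else {})"
      by (simp add: T_def S_def)
    moreover have "Suc p \<notin> T" "finite T"
      using open_lefts_subset[of L R p] by (auto simp: T_def S_def)
    ultimately show ?thesis by simp
  qed
  ultimately show ?case
    using Suc card_Int_atLeastAtMost_Suc[of p R] card_Int_atLeastAtMost_Suc[of p L]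
    unfolding S_def by simp
qed simp

lemma open_lefts_nonempty: "q \<in> R \<Longrightarrow> open_lefts L R (q-1) \<noteq> {}"
  using card_open_lefts[of "q-1"] ballot[of q] by auto

lemma open_lefts_N_empty: "open_lefts L R N = {}"
proof -
  have "{1..N} \<inter> L = L" "{1..N} \<inter> R = R" using L_subset R_subset by auto
  then show ?thesis using card_open_lefts[of N] card_L_eq_card_R by simp
qed

definition partner :: "nat \<Rightarrow> nat" where
  "partner q = pick_partner q (open_lefts L R (q-1))"

lemma partner_open: "q \<in> R \<Longrightarrow> partner q \<in> open_lefts L R (q-1)"
  unfolding partner_def by (rule pick_partner_in[OF finite_open_lefts open_lefts_nonempty])

lemma partner_bounds:
  assumes "q \<in> R"
  shows "partner q \<in> L \<and> 1 \<le> partner q \<and> partner q < q"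
proof -
  have "partner q \<in> L \<inter> {1..q-1}" using open_lefts_subset partner_open[OF assms] by blast
  then show ?thesis by auto
qed

lemma partner_mem_open_lefts_iff:
  assumes "q \<in> R"
  shows "partner q \<in> open_lefts L R p \<longleftrightarrow> partner q \<le> p \<and> p < q"
proof
  assume "partner q \<in> open_lefts L R p"
  then have "partner q \<le> p" and unmatched: "\<not> (\<exists>q'. partner q < q' \<and> q' \<le> p \<and> q' \<in> R \<and> partner q' = partner q)"
    using open_lefts_iff[of "partner q" L R p] unfolding partner_def by auto
  moreover have "p < q"
  proof (rule ccontr)
    assume "\<not> p < q"
    then show False using unmatched partner_bounds[OF assms] assms by auto
  qed
  ultimately show "partner q \<le> p \<and> p < q" by simp
next
  assume p: "partner q \<le> p \<and> p < q"
  have "\<not> (\<exists>q'. partner q < q' \<and> q' \<le> q - 1 \<and> q' \<in> R \<and> partner q' = partner q)"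
    using partner_open[OF assms] open_lefts_iff[of "partner q" L R "q-1"] unfolding partner_def by blast
  then have "\<not> (\<exists>q'. partner q < q' \<and> q' \<le> p \<and> q' \<in> R \<and> partner q' = partner q)"
    using p by auto
  then show "partner q \<in> open_lefts L R p"
    using p partner_bounds[OF assms] open_lefts_iff[of "partner q" L R p] unfolding partner_def by blast
qed

lemma inj_on_partner: "inj_on partner R"
proof (rule inj_onI, rule ccontr)
  have no_later: False if "q1 \<in> R" "q2 \<in> R" "partner q1 = partner q2" "q1 < q2" for q1 q2
    using partner_mem_open_lefts_iff[of q1 "q2-1"] partner_open[OF that(2)] that by (simp; linarith)
  fix q1 q2 assume "q1 \<in> R" "q2 \<in> R" "partner q1 = partner q2" "q1 \<noteq> q2"
  then show False using no_later[of q1 q2] no_later[of q2 q1] by linarith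
qed

lemma partner_surj: "k \<in> L \<Longrightarrow> \<exists>q\<in>R. partner q = k"
  using open_lefts_N_empty open_lefts_iff[of k L R N] L_subset unfolding partner_def by fastforce

lemma partner_arcs_not_cross:
  assumes q: "q1 \<in> R" "q2 \<in> R" "q1 < q2"
  shows "\<not> arcs_cross (sortable_arc (partner q1) q1) (sortable_arc (partner q2) q2)"
proof (cases "q1 \<le> partner q2")
  case True
  then show ?thesis
    using arcs_cross_sortable_arc_disjoint partner_bounds q by blast
next
  case False
  define S where "S = open_lefts L R (q1-1)"
  have "partner q1 = pick_partner q1 S" unfolding S_def partner_def ..
  moreover have "partner q2 \<in> S"
    unfolding S_def using partner_mem_open_lefts_iff[OF q(2)] False q by (simp; linarith)
  moreover have "partner q1 \<noteq> partner q2"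
    using inj_on_partner q by (metis inj_onD less_irrefl)
  ultimately consider "partner q1 < partner q2" "odd (partner q2 + q1)"
    | "partner q2 < partner q1" "even (partner q1 + q1)"
    using pick_partner_above pick_partner_below unfolding S_def
    by (metis finite_open_lefts linorder_neqE_nat)
  then show ?thesis
  proof cases
    case 1
    then show ?thesis
      using arcs_cross_sortable_arc[of "partner q1" q1 "partner q2" q2] partner_bounds q False by auto
  next
    case 2
    then show ?thesis
      using arcs_cross_sortable_arc[of "partner q2" q2 "partner q1" q1] arcs_cross_commute
        partner_bounds q by auto
  qed
qed

definition matching :: "arc set" where
  "matching = (\<lambda>q. sortable_arc (partner q) q) ` R"

lemma left_end_matching: "left_end ` matching = L"
  unfolding matching_def image_image using partner_bounds partner_surj by force

lemma right_end_matching: "right_end ` matching = R"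
  unfolding matching_def image_image by simp

lemma sortable_diagram_matching: "sortable_diagram N matching"
  unfolding sortable_diagram_def noncrossing_diagram_def
proof (intro conjI ballI impI)
  fix a assume "a \<in> matching"
  then obtain q where q: "q \<in> R" "a = sortable_arc (partner q) q" unfolding matching_def by auto
  then show "is_arc N a" "sortable a" using partner_bounds[OF q(1)] R_subset by auto
next
  fix a b assume "a \<in> matching" "b \<in> matching" "a \<noteq> b"
  then obtain q1 q2 where q: "q1 \<in> R" "q2 \<in> R" "q1 \<noteq> q2"
    and ab: "a = sortable_arc (partner q1) q1" "b = sortable_arc (partner q2) q2"
    unfolding matching_def by auto
  show "left_end a \<noteq> left_end b" using inj_on_partner q ab by (auto dest: inj_onD)
  show "right_end a \<noteq> right_end b" using q ab by simp
  show "\<not> arcs_cross a b"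
    using partner_arcs_not_cross q ab arcs_cross_commute by (metis linorder_neqE_nat)
qed

lemma matching_covers:
  assumes "card ({1..p} \<inter> R) < card ({1..p} \<inter> L)"
  shows "\<exists>b\<in>matching. left_end b \<le> p \<and> p < right_end b"
proof -
  obtain k where k: "k \<in> open_lefts L R p"
    using card_open_lefts[of p] assms by (metis add_0 card.empty less_not_refl2 ex_in_conv)
  then obtain q where q: "q \<in> R" "partner q = k"
    using partner_surj open_lefts_subset by blast
  then have "k \<le> p \<and> p < q" using partner_mem_open_lefts_iff k by blast
  then show ?thesis using q unfolding matching_def by force
qed

end

section \<open>Diagrams of paths without peaks of height 1\<close>

locale Mbar_path =
  fixes n :: nat and w :: "step list"
  assumes n: "1 \<le> n" and w_Mbar: "w \<in> Mbar (n+1)"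
begin

definition w_step :: "nat \<Rightarrow> step" where
  "w_step i = w ! (i - 1)"

(* The end sets are read off w by inverting the definition of Psi. *)
definition lefts :: "nat set" where
  "lefts = {x. 1 \<le> x \<and> x \<le> n \<and> w_step (x+1) \<noteq> D}"

definition rights :: "nat set" where
  "rights = {x. 2 \<le> x \<and> x \<le> n + 1 \<and> w_step (x-1) \<noteq> U}"

lemma w_eq_map_w_step: "w = map w_step [1..<n+2]"
proof (rule nth_equalityI)
  show "length w = length (map w_step [1..<n+2])"
    using w_Mbar by (simp add: Mbar_def motzkin_def)
  then show "w ! i = map w_step [1..<n+2] ! i" if "i < length w" for i
    using that by (simp add: w_step_def nth_upt del: upt_Suc)
qed

lemma height_eq_sum: "p \<le> n + 1 \<Longrightarrow> height w p = (\<Sum>i=1..p. step_value (w_step i))"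
  using height_map_upt[of p "n+1" w_step] by (subst w_eq_map_w_step) (simp del: upt_Suc)

lemma height_Suc: "p \<le> n \<Longrightarrow> height w (Suc p) = height w p + step_value (w_step (Suc p))"
  using height_eq_sum[of p] height_eq_sum[of "Suc p"] by simp

lemma height_nonneg: "p \<le> n + 1 \<Longrightarrow> 0 \<le> height w p"
  using w_Mbar w_eq_map_w_step by (simp add: Mbar_def motzkin_def height_def)

lemma height_total: "height w (n+1) = 0"
  using w_Mbar w_eq_map_w_step by (simp add: Mbar_def motzkin_def height_def)

lemma step_at_lefts_rights:
  assumes "1 \<le> i" "i \<le> n + 1"
  shows "step_at n lefts rights i = w_step i"
proof -
  have "w_step 1 \<noteq> D" "w_step (n+1) \<noteq> U"
    using height_Suc[of 0] height_Suc[of n] height_nonneg[of 1] height_nonneg[of n] height_total n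
    by (auto simp: height_def cnt_def)
  then show ?thesis
    using assms n unfolding step_at_def lefts_def rights_def
    by (cases "i = 1"; cases "w_step i") (auto simp: le_Suc_eq)
qed

lemma ends_path_lefts_rights: "ends_path n lefts rights = w"
  unfolding ends_path_def
  by (subst w_eq_map_w_step) (simp add: step_at_lefts_rights del: upt_Suc)

lemma lefts_subset: "lefts \<subseteq> {1..n}" and rights_subset: "rights \<subseteq> {2..n+1}"
  by (auto simp: lefts_def rights_def)

lemma lefts_or_rights_two: "1 \<le> a \<Longrightarrow> a + 2 \<le> n + 1 \<Longrightarrow> a \<in> lefts \<or> a + 2 \<in> rights"
  by (auto simp: lefts_def rights_def)

lemma height_eq_card:
  "1 \<le> p \<Longrightarrow> p \<le> n \<Longrightarrow>
    height w p = 1 + int (card ({1..p-1} \<inter> lefts)) - int (card ({1..p+1} \<inter> rights))"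
proof -
  have "1 \<notin> rights" using rights_subset by auto
  then show "1 \<le> p \<Longrightarrow> p \<le> n \<Longrightarrow> ?thesis"
    using height_ends_path[of rights n lefts p] lefts_or_rights_two
    by (simp add: ends_path_lefts_rights)
qed

lemma card_lefts_eq_card_rights: "card lefts = card rights"
proof -
  have "1 \<notin> rights" "rights \<subseteq> {1..n+1}" using rights_subset by auto
  then show ?thesis
    using height_ends_path_total[of rights n lefts] height_total lefts_or_rights_two n lefts_subset
    by (simp add: ends_path_lefts_rights)
qed

lemma rights_ballot:
  assumes q: "q \<in> rights"
  shows "card ({1..q-1} \<inter> rights) < card ({1..q-1} \<inter> lefts)"
proof -
  obtain p where p: "q = Suc p" "1 \<le> p" "p \<le> n" using q by (auto simp: rights_def intro: that[of "q-1"])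
  have "card ({1..Suc p} \<inter> rights) = card ({1..p} \<inter> rights) + 1"
    using card_Int_atLeastAtMost_Suc[of p rights] q p(1) by simp
  then have height: "height w p = int (card ({1..p-1} \<inter> lefts)) - int (card ({1..p} \<inter> rights))"
    using height_eq_card[OF p(2,3)] by simp
  have lefts_p: "card ({1..p} \<inter> lefts) = card ({1..p-1} \<inter> lefts) + of_bool (p \<in> lefts)"
    using card_Int_atLeastAtMost_Suc[of "p-1" lefts] p(2) by simp
  show ?thesis
  proof (cases "p \<in> lefts")
    case True
    then show ?thesis using height height_nonneg[of p] lefts_p p by simp
  next
    case False
    then have "w_step (Suc p) = D" using p by (simp add: lefts_def)
    then have "height w (Suc p) = height w p - 1" using height_Suc[OF p(3)] by simp
    then show ?thesis using height height_nonneg[of "Suc p"] lefts_p False p by simp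
  qed
qed

lemma card_rights_less_at_peak:
  assumes a: "1 \<le> a" "a \<le> n" "a \<notin> lefts" "a + 1 \<notin> rights"
  shows "card ({1..a} \<inter> rights) < card ({1..a} \<inter> lefts)"
proof -
  have steps: "w_step a = U" "w_step (a+1) = D" using a by (auto simp: lefts_def rights_def)
  have "\<not> has_peak_height 1 (ends_path n lefts rights)"
    using w_Mbar by (simp add: Mbar_def ends_path_lefts_rights)
  then have "height w a \<noteq> 1"
    using steps a step_at_lefts_rights[of a] step_at_lefts_rights[of "a+1"]
    by (subst (asm) has_peak_height_ends_path) (auto simp: ends_path_lefts_rights)
  moreover have "height w a = height w (a-1) + 1"
    using height_Suc[of "a-1"] steps a by simp
  moreover have "0 \<le> height w (a-1)" by (rule height_nonneg) (use a in linarith)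
  ultimately have "2 \<le> height w a" by simp
  then show ?thesis
    using height_eq_card[OF a(1,2)] a card_Int_atLeastAtMost_Suc[of a rights]
      card_Int_atLeastAtMost_Suc[of "a-1" lefts] by simp
qed

sublocale greedy_matching "n+1" lefts rights
proof
  show "lefts \<subseteq> {1..n+1}" "rights \<subseteq> {1..n+1}"
    using lefts_subset rights_subset by auto
  show "card lefts = card rights" by (rule card_lefts_eq_card_rights)
  show "card ({1..q-1} \<inter> rights) < card ({1..q-1} \<inter> lefts)" if "q \<in> rights" for q
    using rights_ballot[OF that] .
qed

lemma matching_in_MAD: "matching \<in> MAD n"
proof (rule MAD_if_saturated[OF sortable_diagram_matching])
  show "a \<in> left_end ` matching \<or> a + 2 \<in> right_end ` matching"
    if "1 \<le> a" "a + 2 \<le> n + 1" for a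
    using lefts_or_rights_two[OF that] by (simp only: left_end_matching right_end_matching)
next
  fix a assume a: "1 \<le> a" "a \<le> n"
  show "a \<in> left_end ` matching \<or> a + 1 \<in> right_end ` matching \<or>
      (\<exists>b\<in>matching. left_end b < a \<and> a + 1 < right_end b)"
  proof (cases "a \<in> lefts \<or> a + 1 \<in> rights")
    case True
    then show ?thesis unfolding left_end_matching right_end_matching by (elim disjE) simp_all
  next
    case False
    then obtain b where b: "b \<in> matching" "left_end b \<le> a" "a < right_end b"
      using matching_covers[OF card_rights_less_at_peak] a by blast
    moreover have "left_end b \<in> lefts" "right_end b \<in> rights"
      using imageI[OF b(1), of left_end] imageI[OF b(1), of right_end]
      by (simp_all only: left_end_matching right_end_matching)
    then have "left_end b \<noteq> a" "right_end b \<noteq> a + 1" using False by auto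
    ultimately have "left_end b < a" "a + 1 < right_end b" by linarith+
    then show ?thesis using b(1) by auto
  qed
qed

lemma Psi_matching: "Psi n matching = w"
  unfolding Psi_eq_ends_path left_end_matching right_end_matching by (rule ends_path_lefts_rights)

end

theorem theorem8p10:
  fixes n :: nat
  assumes "1 \<le> n"
  shows "bij_betw (Psi n) (MAD n) (Mbar (n+1))"
proof (rule bij_betw_imageI)
  show "inj_on (Psi n) (MAD n)" by (rule inj_on_Psi_MAD)
  show "Psi n ` MAD n = Mbar (n+1)"
  proof
    show "Psi n ` MAD n \<subseteq> Mbar (n+1)" using Psi_MAD_in_Mbar assms by blast
    show "Mbar (n+1) \<subseteq> Psi n ` MAD n"
    proof
      fix w assume "w \<in> Mbar (n+1)"
      then interpret Mbar_path n w using assms by unfold_locales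
      show "w \<in> Psi n ` MAD n" using matching_in_MAD Psi_matching by force
    qed
  qed
qed

end
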